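(* Let $\sigma>0$, $\tau_m>0$, and let $\vec X^m\in\underline{V}^h$ be a parameterization of the polygonal curve network $\Gamma^m$ such that assumptions $(\mathcal A)$, $(\mathcal A_1)$ and $(\mathcal A_2)$ below hold. Let $F^m\in W^h$ be given (in the paper $F^m_i(q^i_j)=\lambda[(u_0(\vec X^m_i(q^i_j))-c^m_{k^+(i)})^2-(u_0(\vec X^m_i(q^i_j))-c^m_{k^-(i)})^2]$, but any element of $W^h$ is allowed). Then there exists a unique pair $(\delta\vec X^{m+1},\kappa_{\mathcal M}^{m+1})\in\underline{V}^h_\Phi\times W^h$ such that $$\Big\langle \tfrac{\delta\vec X^{m+1}}{\tau_m},\,\chi\,\vec\omega^m_{\mathcal M}\Big\rangle^h_m-\sigma\,\langle\kappa^{m+1}_{\mathcal M},\chi\rangle^h_m=\langle F^m,\chi\rangle^h_m\quad\forall\chi\in W^h,$$ $$\langle\kappa^{m+1}_{\mathcal M}\,\vec\omega^m_{\mathcal M},\vec\eta\rangle^h_m+\langle\nabla_s\delta\vec X^{m+1},\nabla_s\vec\eta\rangle_m=-\langle\nabla_s\vec X^m,\nabla_s\vec\eta\rangle_m\quad\forall\vec\eta\in\underline{V}^h_\Phi.$$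
   Context: Let $\Phi\in C^2(\mathbb R^3,\mathbb R)$ and $\mathcal M=\{\vec z:\Phi(\vec z)=0\}$ with $\nabla\Phi\neq0$ on $\mathcal M$; set $\vec n_\Phi=\nabla\Phi/\|\nabla\Phi\|$. Curve network: $N_C$ curves $\Gamma_1,\dots,\Gamma_{N_C}$, each parameterized over $I_i=[0,1]$ with a partition $0=q^i_0<q^i_1<\dots<q^i_{N_i}=1$. A curve is either closed (then $I_i$ is periodic, indices are taken modulo $N_i$, i.e. $N_i\equiv 0$, $N_i+1\equiv1$, $-1\equiv N_i-1$, and $j_0^i:=1$) or open (then $j_0^i:=0$). There are $N_T$ triple junctions; for each $k=1,\dots,N_T$ there are three pairwise distinct curve indices $i_{k,1},i_{k,2},i_{k,3}$ (open curves) and endpoints $\rho_{k,l}\in\{0,1\}$, with node index $j_{k,l}\in\{0,N_{i_{k,l}}\}$ satisfying $q^{i_{k,l}}_{j_{k,l}}=\rho_{k,l}$. Every endpoint of every open curve belongs to some triple junction. Spaces: $W^h$ is the set of $(\eta_1,\dots,\eta_{N_C})$ with $\eta_i\in C(I_i,\mathbb R)$ affine on each $[q^i_{j-1},q^i_j]$. $\underline V^h$ is the set of $(\vec\eta_1,\dots,\vec\eta_{N_C})$ with $\vec\eta_i\in C(I_i,\mathbb R^3)$ affine on each $[q^i_{j-1},q^i_j]$ and $\vec\eta_{i_{k,1}}(\rho_{k,1})=\vec\eta_{i_{k,2}}(\rho_{k,2})=\vec\eta_{i_{k,3}}(\rho_{k,3})$ for all $k$. $\vec X^m=(\vec X^m_1,\dots,\vec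 X^m_{N_C})\in\underline V^h$ is given, with image $\Gamma^m$, and $\nabla\Phi(\vec X^m_i(q^i_j))\ne0$ at all nodes. Inner products: $\langle u,v\rangle_m=\sum_i\int_{I_i}u_i\cdot v_i\,\|(\vec X^m_i)_\rho\|\,d\rho$, and $\nabla_s$ denotes $\partial_\rho/\|(\vec X^m_i)_\rho\|$ (arclength derivative on $\Gamma^m$). With $h^m_{i,j-1/2}=\|\vec X^m_i(q^i_j)-\vec X^m_i(q^i_{j-1})\|$, the mass-lumped product is $\langle u,v\rangle^h_m=\tfrac12\sum_{i=1}^{N_C}\sum_{j=1}^{N_i}h^m_{i,j-1/2}\big[(u_i\cdot v_i)((q^i_j)^-)+(u_i\cdot v_i)((q^i_{j-1})^+)\big]$, one-sided limits. Discrete normals: $\vec\omega^m_{\Phi,i}(q^i_j)=\vec n_\Phi(\vec X^m_i(q^i_j))$; $\vec\omega^m_{d,i}(q^i_j)=\frac{\vec X^m_i(q^i_{j+1})-\vec X^m_i(q^i_{j-1})}{\|\vec X^m_i(q^i_{j+1})-\vec X^m_i(q^i_{j-1})\|}$ for closed curves and for interior nodes of open curves, while for open curves $\vec\omega^m_{d,i}(q^i_0)=\frac{\vec X^m_i(q^i_1)-\vec X^m_i(q^i_0)}{\|\cdot\|}$ and $\vec\omega^m_{d,i}(q^i_{N_i})=\frac{\vec X^m_i(q^i_{N_i})-\vec X^m_i(q^i_{N_i-1})}{\|\cdot\|}$; $\vec\omega^m_{\mathcal M,i}(q^i_j)=\vec\omega^m_{d,i}(q^i_j)\times\vec\omega^m_{\Phi,i}(q^i_j)$;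 these are extended to $I_i$ as piecewise linear interpolants. $\underline V^h_\Phi=\{\vec\eta\in\underline V^h:\vec\eta_i(q^i_j)\cdot\vec\omega^m_{\Phi,i}(q^i_j)=0$ for all $i$ and nodes $j\}$. Assumption $(\mathcal A)$: $h^m_{i,j-1/2}>0$ for all $i$, $j=1,\dots,N_i$, and $\vec X^m_i(q^i_{j+1})\neq\vec X^m_i(q^i_{j-1})$ for $j=1,\dots,N_i$ if $\Gamma_i$ is closed and for $j=1,\dots,N_i-1$ if $\Gamma_i$ is open. Assumption $(\mathcal A_1)$: for every closed curve $\Gamma_i$, $\dim\operatorname{span}\{\vec\omega^m_{\mathcal M,i}(q^i_j),\vec\omega^m_{\Phi,i}(q^i_j)\}_{j=1}^{N_i}=3$. Assumption $(\mathcal A_2)$: for every triple junction $k$, $\dim\operatorname{span}\bigcup_{l=1}^3\{\vec\omega^m_{\mathcal M,i_{k,l}}(q^{i_{k,l}}_j),\vec\omega^m_{\Phi,i_{k,l}}(q^{i_{k,l}}_j)\}_{j=1}^{N_{i_{k,l}}-1}=3$. *)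

theory Defs
  imports "HOL-Analysis.Analysis" "HOL-Analysis.Cross3"
begin

(* Curves are indexed by i < NC; curve i has N i intervals, partition q i 0 < ... < q i (N i),
   clsd i says whether curve i is closed.  A scalar network function is nat => real => real,
   a vector network function nat => real => real^3, where component i is the function on
   I_i = [0,1].  Elements of W^h / V^h are normalised to be 0 for i >= NC and for rho outside [0,1]
   (so that uniqueness is meaningful).
   Triple junctions k < NT: curve indices ic k l and endpoints rh k l (l < 3). *)

definition node_idx :: "nat \<Rightarrow> real \<Rightarrow> nat" where
  "node_idx Ni r = (if r = 0 then 0 else Ni)"

definition network :: "nat \<Rightarrow> (nat \<Rightarrow> nat) \<Rightarrow> (nat \<Rightarrow> nat \<Rightarrow> real) \<Rightarrow> (nat \<Rightarrow> bool)
    \<Rightarrow> nat \<Rightarrow> (nat \<Rightarrow> nat \<Rightarrow> nat) \<Rightarrow> (nat \<Rightarrow> nat \<Rightarrow> real) \<Rightarrow> bool" where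
  "network NC N q clsd NT ic rh \<longleftrightarrow>
     (\<forall>i<NC. N i \<ge> 1 \<and> q i 0 = 0 \<and> q i (N i) = 1 \<and> (\<forall>j<N i. q i j < q i (Suc j))) \<and>
     (\<forall>k<NT. (\<forall>l<3. ic k l < NC \<and> \<not> clsd (ic k l) \<and> rh k l \<in> {0, 1}) \<and>
              ic k 0 \<noteq> ic k 1 \<and> ic k 0 \<noteq> ic k 2 \<and> ic k 1 \<noteq> ic k 2) \<and>
     (\<forall>i<NC. \<not> clsd i \<longrightarrow> (\<forall>r\<in>{0::real, 1}. \<exists>k<NT. \<exists>l<3. ic k l = i \<and> rh k l = r))"

definition pw_affine :: "(nat \<Rightarrow> real) \<Rightarrow> nat \<Rightarrow> bool \<Rightarrow> (real \<Rightarrow> 'v::real_normed_vector) \<Rightarrow> bool" where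
  "pw_affine qi Ni cl f \<longleftrightarrow>
     continuous_on {0..1} f \<and> (cl \<longrightarrow> f 0 = f 1) \<and>
     (\<forall>j\<in>{1..Ni}. \<exists>a b. \<forall>r\<in>{qi (j - 1)..qi j}. f r = a + r *\<^sub>R b)"

definition extensional_net :: "nat \<Rightarrow> (nat \<Rightarrow> real \<Rightarrow> 'v::zero) \<Rightarrow> bool" where
  "extensional_net NC u \<longleftrightarrow> (\<forall>i r. (i \<ge> NC \<or> r \<notin> {0..1}) \<longrightarrow> u i r = 0)"

definition Wh :: "nat \<Rightarrow> (nat \<Rightarrow> nat) \<Rightarrow> (nat \<Rightarrow> nat \<Rightarrow> real) \<Rightarrow> (nat \<Rightarrow> bool)
    \<Rightarrow> (nat \<Rightarrow> real \<Rightarrow> real) set" where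
  "Wh NC N q clsd = {u. extensional_net NC u \<and> (\<forall>i<NC. pw_affine (q i) (N i) (clsd i) (u i))}"

definition Vh :: "nat \<Rightarrow> (nat \<Rightarrow> nat) \<Rightarrow> (nat \<Rightarrow> nat \<Rightarrow> real) \<Rightarrow> (nat \<Rightarrow> bool)
    \<Rightarrow> nat \<Rightarrow> (nat \<Rightarrow> nat \<Rightarrow> nat) \<Rightarrow> (nat \<Rightarrow> nat \<Rightarrow> real) \<Rightarrow> (nat \<Rightarrow> real \<Rightarrow> real^3) set" where
  "Vh NC N q clsd NT ic rh = {u. extensional_net NC u \<and>
     (\<forall>i<NC. pw_affine (q i) (N i) (clsd i) (u i)) \<and>
     (\<forall>k<NT. u (ic k 0) (rh k 0) = u (ic k 1) (rh k 1) \<and> u (ic k 1) (rh k 1) = u (ic k 2) (rh k 2))}"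

definition nxt :: "nat \<Rightarrow> bool \<Rightarrow> nat \<Rightarrow> nat" where
  "nxt Ni cl j = (if cl \<and> j = Ni then 1 else j + 1)"
definition prv :: "nat \<Rightarrow> bool \<Rightarrow> nat \<Rightarrow> nat" where
  "prv Ni cl j = (if cl \<and> j = 0 then Ni - 1 else j - 1)"

definition omega_d :: "(nat \<Rightarrow> nat) \<Rightarrow> (nat \<Rightarrow> nat \<Rightarrow> real) \<Rightarrow> (nat \<Rightarrow> bool)
    \<Rightarrow> (nat \<Rightarrow> real \<Rightarrow> real^3) \<Rightarrow> nat \<Rightarrow> nat \<Rightarrow> real^3" where
  "omega_d N q clsd X i j =
     (let P = (\<lambda>j. X i (q i j)) in
      if clsd i \<or> (0 < j \<and> j < N i) then
        (P (nxt (N i) (clsd i) j) - P (prv (N i) (clsd i) j)) /\<^sub>R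
          norm (P (nxt (N i) (clsd i) j) - P (prv (N i) (clsd i) j))
      else if j = 0 then (P 1 - P 0) /\<^sub>R norm (P 1 - P 0)
      else (P (N i) - P (N i - 1)) /\<^sub>R norm (P (N i) - P (N i - 1)))"

definition n_Phi :: "(real^3 \<Rightarrow> real^3) \<Rightarrow> real^3 \<Rightarrow> real^3" where
  "n_Phi gPhi z = gPhi z /\<^sub>R norm (gPhi z)"

definition omega_Phi :: "(real^3 \<Rightarrow> real^3) \<Rightarrow> (nat \<Rightarrow> nat \<Rightarrow> real)
    \<Rightarrow> (nat \<Rightarrow> real \<Rightarrow> real^3) \<Rightarrow> nat \<Rightarrow> nat \<Rightarrow> real^3" where
  "omega_Phi gPhi q X i j = n_Phi gPhi (X i (q i j))"

definition omega_M :: "(real^3 \<Rightarrow> real^3) \<Rightarrow> (nat \<Rightarrow> nat) \<Rightarrow> (nat \<Rightarrow> nat \<Rightarrow> real) \<Rightarrow> (nat \<Rightarrow> bool)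
    \<Rightarrow> (nat \<Rightarrow> real \<Rightarrow> real^3) \<Rightarrow> nat \<Rightarrow> nat \<Rightarrow> real^3" where
  "omega_M gPhi N q clsd X i j = cross3 (omega_d N q clsd X i j) (omega_Phi gPhi q X i j)"

definition pl_interp :: "(nat \<Rightarrow> real) \<Rightarrow> nat \<Rightarrow> (nat \<Rightarrow> 'v::real_vector) \<Rightarrow> real \<Rightarrow> 'v" where
  "pl_interp qi Ni a r =
     (if r \<le> qi 0 then a 0
      else if r > qi Ni then a Ni
      else (let j = (LEAST j. r \<le> qi j) in
            ((qi j - r) / (qi j - qi (j - 1))) *\<^sub>R a (j - 1) +
            ((r - qi (j - 1)) / (qi j - qi (j - 1))) *\<^sub>R a j))"

definition omega_M_fun :: "(real^3 \<Rightarrow> real^3) \<Rightarrow> (nat \<Rightarrow> nat) \<Rightarrow> (nat \<Rightarrow> nat \<Rightarrow> real) \<Rightarrow> (nat \<Rightarrow> bool)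
    \<Rightarrow> (nat \<Rightarrow> real \<Rightarrow> real^3) \<Rightarrow> nat \<Rightarrow> real \<Rightarrow> real^3" where
  "omega_M_fun gPhi N q clsd X i = pl_interp (q i) (N i) (omega_M gPhi N q clsd X i)"

definition V_Phi :: "(real^3 \<Rightarrow> real^3) \<Rightarrow> nat \<Rightarrow> (nat \<Rightarrow> nat) \<Rightarrow> (nat \<Rightarrow> nat \<Rightarrow> real) \<Rightarrow> (nat \<Rightarrow> bool)
    \<Rightarrow> nat \<Rightarrow> (nat \<Rightarrow> nat \<Rightarrow> nat) \<Rightarrow> (nat \<Rightarrow> nat \<Rightarrow> real) \<Rightarrow> (nat \<Rightarrow> real \<Rightarrow> real^3)
    \<Rightarrow> (nat \<Rightarrow> real \<Rightarrow> real^3) set" where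
  "V_Phi gPhi NC N q clsd NT ic rh X = {u \<in> Vh NC N q clsd NT ic rh.
      \<forall>i<NC. \<forall>j\<le>N i. u i (q i j) \<bullet> omega_Phi gPhi q X i j = 0}"

(* mass-lumped inner product; the argument f i r is the pointwise product (u_i . v_i)(r).
   All functions it is applied to are continuous, so one-sided limits equal nodal values. *)
definition lumped :: "nat \<Rightarrow> (nat \<Rightarrow> nat) \<Rightarrow> (nat \<Rightarrow> nat \<Rightarrow> real) \<Rightarrow> (nat \<Rightarrow> real \<Rightarrow> real^3)
    \<Rightarrow> (nat \<Rightarrow> real \<Rightarrow> real) \<Rightarrow> real" where
  "lumped NC N q X f = (1/2) * (\<Sum>i<NC. \<Sum>j\<in>{1..N i}.
      norm (X i (q i j) - X i (q i (j - 1))) * (f i (q i j) + f i (q i (j - 1))))"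

definition nabla_s :: "(nat \<Rightarrow> real \<Rightarrow> real^3) \<Rightarrow> (nat \<Rightarrow> real \<Rightarrow> real^3) \<Rightarrow> nat \<Rightarrow> real \<Rightarrow> real^3" where
  "nabla_s X u i r = vector_derivative (u i) (at r) /\<^sub>R norm (vector_derivative (X i) (at r))"

definition l2m :: "nat \<Rightarrow> (nat \<Rightarrow> real \<Rightarrow> real^3) \<Rightarrow> (nat \<Rightarrow> real \<Rightarrow> real^3)
    \<Rightarrow> (nat \<Rightarrow> real \<Rightarrow> real^3) \<Rightarrow> real" where
  "l2m NC X u v = (\<Sum>i<NC. integral {0..1} (\<lambda>r. (u i r \<bullet> v i r) * norm (vector_derivative (X i) (at r))))"

definition assm_A :: "nat \<Rightarrow> (nat \<Rightarrow> nat) \<Rightarrow> (nat \<Rightarrow> nat \<Rightarrow> real) \<Rightarrow> (nat \<Rightarrow> bool)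
    \<Rightarrow> (nat \<Rightarrow> real \<Rightarrow> real^3) \<Rightarrow> bool" where
  "assm_A NC N q clsd X \<longleftrightarrow> (\<forall>i<NC.
     (\<forall>j\<in>{1..N i}. norm (X i (q i j) - X i (q i (j - 1))) > 0) \<and>
     (\<forall>j\<in>(if clsd i then {1..N i} else {1..<N i}).
        X i (q i (nxt (N i) (clsd i) j)) \<noteq> X i (q i (prv (N i) (clsd i) j))))"

definition assm_A1 :: "(real^3 \<Rightarrow> real^3) \<Rightarrow> nat \<Rightarrow> (nat \<Rightarrow> nat) \<Rightarrow> (nat \<Rightarrow> nat \<Rightarrow> real)
    \<Rightarrow> (nat \<Rightarrow> bool) \<Rightarrow> (nat \<Rightarrow> real \<Rightarrow> real^3) \<Rightarrow> bool" where
  "assm_A1 gPhi NC N q clsd X \<longleftrightarrow> (\<forall>i<NC. clsd i \<longrightarrow>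
     dim (span ((\<Union>j\<in>{1..N i}. {omega_M gPhi N q clsd X i j, omega_Phi gPhi q X i j}))) = 3)"

definition assm_A2 :: "(real^3 \<Rightarrow> real^3) \<Rightarrow> (nat \<Rightarrow> nat) \<Rightarrow> (nat \<Rightarrow> nat \<Rightarrow> real)
    \<Rightarrow> (nat \<Rightarrow> bool) \<Rightarrow> nat \<Rightarrow> (nat \<Rightarrow> nat \<Rightarrow> nat) \<Rightarrow> (nat \<Rightarrow> real \<Rightarrow> real^3) \<Rightarrow> bool" where
  "assm_A2 gPhi N q clsd NT ic X \<longleftrightarrow> (\<forall>k<NT.
     dim (span (\<Union>l<3. \<Union>j\<in>{1..<N (ic k l)}.
        {omega_M gPhi N q clsd X (ic k l) j, omega_Phi gPhi q X (ic k l) j})) = 3)"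

end

(* The scheme is a square linear system for the nodal values of (\<delta>X, \<kappa>) in the
   finite-dimensional space V\<^sup>h\<^sub>\<Phi> \<times> W\<^sup>h, so it suffices that the homogeneous system has
   only the trivial solution. Testing it with \<chi> = \<kappa> and \<eta> = \<delta>X gives
   \<tau>\<sigma>|\<kappa>|\<^sup>2\<^sub>h + |\<nabla>\<^sub>s\<delta>X|\<^sup>2 = 0, so \<kappa> = 0 and \<delta>X is constant on every curve.
   Testing the first equation with the interpolant of \<delta>X \<cdot> \<omega>\<^sub>M shows that these
   constants are orthogonal to all \<omega>\<^sub>M, and they are orthogonal to all \<omega>\<^sub>\<Phi> by definition
   of V\<^sup>h\<^sub>\<Phi>. On a closed curve (A1) then forces the constant to vanish; on open curves the
   junction condition makes the constants of the three curves meeting at a junction equal,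
   and (A2) forces them to vanish. *)

theory Submission
  imports Defs "HOL-Library.Function_Algebras"
begin

section \<open>Finite-dimensional linear algebra\<close>

instantiation "fun" :: (type, real_vector) real_vector
begin
definition scaleR_fun :: "real \<Rightarrow> ('a \<Rightarrow> 'b) \<Rightarrow> 'a \<Rightarrow> 'b" where
  "scaleR_fun c f = (\<lambda>x. c *\<^sub>R f x)"
instance by standard (auto simp: scaleR_fun_def fun_eq_iff scaleR_add_right scaleR_add_left)
end

lemma scaleR_fun_apply [simp]: "(c *\<^sub>R f) x = c *\<^sub>R f x"
  by (simp add: scaleR_fun_def)

lemma sum_fun_apply: "(\<Sum>s\<in>A. f s) x = (\<Sum>s\<in>A. f s x)"
  by (induction A rule: infinite_finite_induct) auto

definition point_basis :: "'k set \<Rightarrow> ('k \<Rightarrow> 'b::euclidean_space) set" where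
  "point_basis K = (\<lambda>(k, e) k'. if k' = k then e else 0) ` (K \<times> Basis)"

lemma finite_point_basis: "finite K \<Longrightarrow> finite (point_basis K)"
  unfolding point_basis_def by simp

lemma card_point_basis_real:
  assumes "finite K"
  shows "card (point_basis K :: ('k \<Rightarrow> real) set) \<le> card K"
proof -
  have "card (point_basis K :: ('k \<Rightarrow> real) set) \<le> card (K \<times> {1::real})"
    unfolding point_basis_def Basis_real_def using assms by (intro card_image_le) simp
  then show ?thesis by (simp add: card_cartesian_product)
qed

lemma finite_support_in_span_point_basis:
  fixes z :: "'k \<Rightarrow> 'b::euclidean_space"
  assumes K: "finite K" and z: "\<And>k. k \<notin> K \<Longrightarrow> z k = 0"
  shows "z \<in> span (point_basis K)"
proof -
  define d where "d = (\<lambda>(k::'k, e::'b) k'. if k' = k then e else 0)"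
  have "z = (\<Sum>p\<in>K \<times> Basis. (z (fst p) \<bullet> snd p) *\<^sub>R d p)"
  proof (rule ext)
    fix k'
    have "(\<Sum>p\<in>K \<times> Basis. (z (fst p) \<bullet> snd p) *\<^sub>R d p) k' =
          (\<Sum>k\<in>K. \<Sum>e\<in>Basis. (z k \<bullet> e) *\<^sub>R d (k, e) k')"
      by (simp add: sum_fun_apply sum.cartesian_product split_beta)
    also have "\<dots> = (\<Sum>k\<in>K. if k' = k then (\<Sum>e\<in>Basis. (z k \<bullet> e) *\<^sub>R e) else 0)"
      unfolding d_def by (auto intro!: sum.cong)
    also have "\<dots> = z k'"
      using K z by (simp add: euclidean_representation)
    finally show "z k' = (\<Sum>p\<in>K \<times> Basis. (z (fst p) \<bullet> snd p) *\<^sub>R d p) k'" by simp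
  qed
  also have "\<dots> \<in> span (point_basis K)"
    unfolding point_basis_def d_def[symmetric]
    by (intro span_sum span_scale span_base imageI) simp
  finally show ?thesis .
qed

lemma finite_basis_if_inj_on_into_finite_span:
  fixes E :: "'a::real_vector \<Rightarrow> 'b::real_vector"
  assumes "subspace U" "linear E" "inj_on E U" "finite H" "E ` U \<subseteq> span H"
  obtains S where "finite S" "independent S" "span S = U"
proof -
  obtain S where S: "S \<subseteq> U" "independent S" "U \<subseteq> span S"
    using basis_exists[of U] by metis
  have span_S: "span S = U"
    using S span_minimal[OF S(1) assms(1)] by auto
  have "independent (E ` S)"
    using linear_independent_injective_image[OF assms(2) S(2)] assms(3) span_S by simp
  moreover have "E ` S \<subseteq> span H"
    using S(1) assms(5) by auto
  ultimately have "finite (E ` S)"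
    using independent_span_bound[OF assms(4)] by blast
  moreover have "inj_on E S"
    using assms(3) S(1) inj_on_subset by blast
  ultimately have "finite S"
    using finite_imageD by blast
  then show thesis using S(2) span_S by (rule that)
qed

lemma span_subset_if_independent_card_le:
  assumes T: "independent T" "finite T" "T \<subseteq> span D" and D: "finite D" "card D \<le> card T"
  shows "span D \<subseteq> span T"
proof -
  have "d \<in> span T" if d: "d \<in> D" for d
  proof (rule ccontr)
    assume "d \<notin> span T"
    then have "independent (insert d T)" and "d \<notin> T"
      using T(1) span_base[of d T] by (auto simp: independent_insert)
    moreover have "insert d T \<subseteq> span D"
      using T(3) d span_base by blast
    ultimately have "card (insert d T) \<le> card D"
      using independent_span_bound[OF D(1)] by blast
    then show False using \<open>d \<notin> T\<close> T(2) D(2) by simp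
  qed
  then show ?thesis
    by (meson span_minimal subspace_span subsetI)
qed

text \<open>Existence comes from injectivity of \<open>u \<mapsto> (B u s)\<^sub>s\<^sub>\<in>\<^sub>S\<close> into the
  \<open>card S\<close>-dimensional space of functions on the basis \<open>S\<close>.\<close>

lemma bilinear_form_unique_solution:
  fixes B :: "'a::real_vector \<Rightarrow> 'a \<Rightarrow> real" and l :: "'a \<Rightarrow> real"
  assumes S: "finite S" "independent S" "span S = U"
    and B_left: "\<And>v. linear (\<lambda>u. B u v)" and B_right: "\<And>u. linear (B u)" and l: "linear l"
    and nondegenerate: "\<And>u. u \<in> U \<Longrightarrow> \<forall>v\<in>U. B u v = 0 \<Longrightarrow> u = 0"
  shows "\<exists>!u. u \<in> U \<and> (\<forall>v\<in>U. B u v = l v)"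
proof -
  have eq_on_U: "f v = g v" if "linear f" "linear g" "\<And>s. s \<in> S \<Longrightarrow> f s = g s" "v \<in> U"
    for f g :: "'a \<Rightarrow> real" and v
    using linear_eq_on_span[OF that(1,2,3)] that(4) S(3) by blast
  have U: "subspace U"
    using S(3) subspace_span by blast
  define G where "G u = (\<lambda>s. if s \<in> S then B u s else 0)" for u
  have G: "linear G"
    unfolding G_def by (rule linearI) (auto simp: fun_eq_iff linear_add[OF B_left] linear_scale[OF B_left])
  have "inj_on G U"
  proof (rule inj_onI)
    fix x y assume xy: "x \<in> U" "y \<in> U" "G x = G y"
    then have "x - y \<in> U" using U by (simp add: subspace_diff)
    moreover have "B (x - y) s = 0" if "s \<in> S" for s
      using xy(3) that linear_diff[OF B_left] unfolding G_def by (metis diff_self)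
    then have "\<forall>v\<in>U. B (x - y) v = 0"
      using eq_on_U[OF B_right[of "x - y"] linear_zero] by blast
    ultimately show "x = y" using nondegenerate by fastforce
  qed
  then have inj_S: "inj_on G S" and indep: "independent (G ` S)"
    using S inj_on_subset[of G U S] span_superset[of S]
      linear_independent_injective_image[OF G S(2)] by auto
  have "G ` S \<subseteq> span (point_basis S)"
    unfolding G_def by (auto intro: finite_support_in_span_point_basis[OF S(1)])
  moreover have "card (point_basis S :: ('a \<Rightarrow> real) set) \<le> card (G ` S)"
    using card_point_basis_real[OF S(1)] card_image[OF inj_S] by simp
  ultimately have "span (point_basis S) \<subseteq> span (G ` S)"
    using span_subset_if_independent_card_le[OF indep] finite_point_basis S(1) by blast
  moreover have "(\<lambda>s. if s \<in> S then l s else 0) \<in> span (point_basis S)"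
    by (rule finite_support_in_span_point_basis[OF S(1)]) simp
  ultimately have "(\<lambda>s. if s \<in> S then l s else 0) \<in> G ` U"
    using span_linear_image[OF G, of S] S(3) by auto
  then obtain u where u: "u \<in> U" "G u = (\<lambda>s. if s \<in> S then l s else 0)"
    by (metis imageE)
  then have "B u s = l s" if "s \<in> S" for s
    using that fun_cong[OF u(2), of s] unfolding G_def by simp
  then have solves: "\<forall>v\<in>U. B u v = l v"
    using eq_on_U[OF B_right l] by blast
  show ?thesis
  proof (rule ex1I[of _ u])
    fix u' assume u': "u' \<in> U \<and> (\<forall>v\<in>U. B u' v = l v)"
    then have "u' - u \<in> U" and "\<forall>v\<in>U. B (u' - u) v = 0"
      using u(1) U solves by (auto simp: subspace_diff linear_diff[OF B_left])
    then show "u' = u" using nondegenerate by fastforce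
  qed (use u solves in blast)
qed

section \<open>Piecewise affine functions on a partition of the unit interval\<close>

definition unit_partition :: "(nat \<Rightarrow> real) \<Rightarrow> nat \<Rightarrow> bool" where
  "unit_partition qi Ni \<longleftrightarrow> Ni \<ge> 1 \<and> qi 0 = 0 \<and> qi Ni = 1 \<and> (\<forall>j<Ni. qi j < qi (Suc j))"

lemma unit_partition_less:
  assumes "unit_partition qi Ni" "j < k" "k \<le> Ni"
  shows "qi j < qi k"
  using assms(2,3)
proof (induction k)
  case (Suc k)
  have "qi k < qi (Suc k)"
    using assms(1) Suc.prems unfolding unit_partition_def by auto
  then show ?case using Suc by (cases "j = k") auto
qed simp

lemma unit_partition_le:
  assumes "unit_partition qi Ni" "j \<le> k" "k \<le> Ni"
  shows "qi j \<le> qi k"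
  using unit_partition_less[OF assms(1)] assms(2,3) by (cases "j = k") (auto simp: order.order_iff_strict)

lemma unit_partition_node_in_01:
  assumes "unit_partition qi Ni" "j \<le> Ni"
  shows "qi j \<in> {0..1}"
  using unit_partition_le[OF assms(1), of 0 j] unit_partition_le[OF assms(1), of j Ni] assms
  unfolding unit_partition_def by auto

lemma unit_partition_segment_less:
  assumes "unit_partition qi Ni" "j \<in> {1..Ni}"
  shows "qi (j - 1) < qi j"
  using unit_partition_less[OF assms(1), of "j - 1" j] assms(2) by auto

lemma unit_partition_cover:
  assumes "unit_partition qi Ni" "r \<in> {0..1}"
  obtains j where "j \<in> {1..Ni}" "r \<in> {qi (j - 1)..qi j}"
proof -
  have ex: "\<exists>j\<le>Ni. r \<le> qi j" using assms unfolding unit_partition_def by auto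
  define j where "j = (LEAST j. r \<le> qi j)"
  have jr: "r \<le> qi j"
    unfolding j_def using ex by (meson LeastI)
  have jN: "j \<le> Ni"
    unfolding j_def using ex by (meson Least_le order_trans)
  show thesis
  proof (cases "j = 0")
    case True
    then have "r = 0" using jr assms unfolding unit_partition_def by auto
    then show ?thesis
      using that[of 1] unit_partition_node_in_01[OF assms(1), of 1] assms(1)
      unfolding unit_partition_def by auto
  next
    case False
    have "\<not> r \<le> qi (j - 1)"
      using False not_less_Least[of "j - 1" "\<lambda>j. r \<le> qi j"] unfolding j_def by auto
    then show ?thesis using that[of j] False jr jN by auto
  qed
qed

lemma pw_affine_on_segment:
  fixes f :: "real \<Rightarrow> 'v::real_normed_vector"
  assumes "unit_partition qi Ni" "pw_affine qi Ni cl f" "j \<in> {1..Ni}" "r \<in> {qi (j - 1)..qi j}"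
  shows "f r = f (qi (j - 1)) + ((r - qi (j - 1)) / (qi j - qi (j - 1))) *\<^sub>R (f (qi j) - f (qi (j - 1)))"
proof -
  obtain a b where ab: "\<forall>r\<in>{qi (j - 1)..qi j}. f r = a + r *\<^sub>R b"
    using assms(2,3) unfolding pw_affine_def by blast
  have lt: "qi (j - 1) < qi j"
    using unit_partition_segment_less[OF assms(1,3)] .
  then have f: "f (qi (j - 1)) = a + qi (j - 1) *\<^sub>R b" "f (qi j) = a + qi j *\<^sub>R b" "f r = a + r *\<^sub>R b"
    using ab assms(4) by auto
  then have "f (qi j) - f (qi (j - 1)) = (qi j - qi (j - 1)) *\<^sub>R b"
    by (simp add: algebra_simps)
  then have "((r - qi (j - 1)) / (qi j - qi (j - 1))) *\<^sub>R (f (qi j) - f (qi (j - 1))) = (r - qi (j - 1)) *\<^sub>R b"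
    using lt by simp
  then show ?thesis
    using f by (simp add: algebra_simps)
qed

lemma pw_affine_eq_0_if_nodes_eq_0:
  fixes f :: "real \<Rightarrow> 'v::real_normed_vector"
  assumes "unit_partition qi Ni" "pw_affine qi Ni cl f" "\<And>j. j \<le> Ni \<Longrightarrow> f (qi j) = 0" "r \<in> {0..1}"
  shows "f r = 0"
proof -
  obtain j where j: "j \<in> {1..Ni}" "r \<in> {qi (j - 1)..qi j}"
    using unit_partition_cover[OF assms(1,4)] .
  moreover have "f (qi (j - 1)) = 0" "f (qi j) = 0"
    using assms(3) j(1) by auto
  ultimately show ?thesis using pw_affine_on_segment[OF assms(1,2) j] by simp
qed

lemma pw_affine_zero: "pw_affine qi Ni cl (0 :: real \<Rightarrow> 'v::real_normed_vector)"
  unfolding pw_affine_def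
proof (intro conjI ballI)
  fix j show "\<exists>a b. \<forall>r\<in>{qi (j - 1)..qi j}. (0 :: real \<Rightarrow> 'v) r = a + r *\<^sub>R b"
    by (rule exI[of _ 0], rule exI[of _ 0]) simp
qed (auto simp: continuous_on_const)

lemma pw_affine_add:
  assumes "pw_affine qi Ni cl f" "pw_affine qi Ni cl g"
  shows "pw_affine qi Ni cl (f + g)"
  unfolding pw_affine_def
proof (intro conjI ballI)
  show "continuous_on {0..1} (f + g)"
    using assms unfolding pw_affine_def plus_fun_def by (blast intro: continuous_on_add)
  show "cl \<longrightarrow> (f + g) 0 = (f + g) 1"
    using assms unfolding pw_affine_def by auto
  fix j assume j: "j \<in> {1..Ni}"
  obtain a b where "\<forall>r\<in>{qi (j - 1)..qi j}. f r = a + r *\<^sub>R b"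
    using assms(1) j unfolding pw_affine_def by blast
  moreover obtain a' b' where "\<forall>r\<in>{qi (j - 1)..qi j}. g r = a' + r *\<^sub>R b'"
    using assms(2) j unfolding pw_affine_def by blast
  ultimately have "\<forall>r\<in>{qi (j - 1)..qi j}. (f + g) r = (a + a') + r *\<^sub>R (b + b')"
    by (simp add: algebra_simps)
  then show "\<exists>a b. \<forall>r\<in>{qi (j - 1)..qi j}. (f + g) r = a + r *\<^sub>R b" by blast
qed

lemma pw_affine_scaleR:
  assumes "pw_affine qi Ni cl f"
  shows "pw_affine qi Ni cl (c *\<^sub>R f)"
  unfolding pw_affine_def
proof (intro conjI ballI)
  show "continuous_on {0..1} (c *\<^sub>R f)"
    using assms unfolding pw_affine_def scaleR_fun_def by (auto intro!: continuous_intros)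
  show "cl \<longrightarrow> (c *\<^sub>R f) 0 = (c *\<^sub>R f) 1"
    using assms unfolding pw_affine_def by auto
  fix j assume j: "j \<in> {1..Ni}"
  obtain a b where "\<forall>r\<in>{qi (j - 1)..qi j}. f r = a + r *\<^sub>R b"
    using assms j unfolding pw_affine_def by blast
  then have "\<forall>r\<in>{qi (j - 1)..qi j}. (c *\<^sub>R f) r = c *\<^sub>R a + r *\<^sub>R (c *\<^sub>R b)"
    by (simp add: algebra_simps)
  then show "\<exists>a b. \<forall>r\<in>{qi (j - 1)..qi j}. (c *\<^sub>R f) r = a + r *\<^sub>R b" by blast
qed

lemma pw_affine_cong:
  assumes P: "unit_partition qi Ni" and g: "pw_affine qi Ni cl g" and fg: "\<And>r. r \<in> {0..1} \<Longrightarrow> f r = g r"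
  shows "pw_affine qi Ni cl f"
  unfolding pw_affine_def
proof (intro conjI ballI)
  show "continuous_on {0..1} f"
    using g fg unfolding pw_affine_def by (auto intro: continuous_on_eq)
  show "cl \<longrightarrow> f 0 = f 1"
    using g fg unfolding pw_affine_def by simp
  fix j assume j: "j \<in> {1..Ni}"
  then obtain a b where ab: "\<forall>r\<in>{qi (j - 1)..qi j}. g r = a + r *\<^sub>R b"
    using g unfolding pw_affine_def by blast
  have "{qi (j - 1)..qi j} \<subseteq> {0..1}"
    using unit_partition_node_in_01[OF P, of "j - 1"] unit_partition_node_in_01[OF P, of j] j by auto
  then have "\<forall>r\<in>{qi (j - 1)..qi j}. f r = a + r *\<^sub>R b"
    using ab fg by auto
  then show "\<exists>a b. \<forall>r\<in>{qi (j - 1)..qi j}. f r = a + r *\<^sub>R b" by blast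
qed

lemma pl_interp_segment_right_closed:
  assumes "unit_partition qi Ni" "j \<in> {1..Ni}" "qi (j - 1) < r" "r \<le> qi j"
  shows "pl_interp qi Ni a r = ((qi j - r) / (qi j - qi (j - 1))) *\<^sub>R a (j - 1) +
            ((r - qi (j - 1)) / (qi j - qi (j - 1))) *\<^sub>R a j"
proof -
  have "(LEAST k. r \<le> qi k) = j"
  proof (rule Least_equality)
    fix k assume "r \<le> qi k"
    show "j \<le> k"
    proof (rule ccontr)
      assume "\<not> j \<le> k"
      then have "qi k \<le> qi (j - 1)" using unit_partition_le[OF assms(1), of k "j - 1"] assms(2) by auto
      then show False using \<open>r \<le> qi k\<close> assms(3) by auto
    qed
  qed (rule assms(4))
  moreover have "qi 0 \<le> qi (j - 1)" "qi j \<le> qi Ni"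
    using unit_partition_le[OF assms(1)] assms(2) by auto
  ultimately show ?thesis
    using assms(3,4) unfolding pl_interp_def Let_def by auto
qed

lemma pl_interp_node:
  assumes "unit_partition qi Ni" "j \<le> Ni"
  shows "pl_interp qi Ni a (qi j) = a j"
proof (cases "j = 0")
  case False
  then show ?thesis
    using pl_interp_segment_right_closed[OF assms(1), of j "qi j" a] unit_partition_segment_less[OF assms(1)] assms
    by auto
qed (simp add: pl_interp_def)

lemma pl_interp_segment:
  assumes "unit_partition qi Ni" "j \<in> {1..Ni}" "r \<in> {qi (j - 1)..qi j}"
  shows "pl_interp qi Ni a r = ((qi j - r) / (qi j - qi (j - 1))) *\<^sub>R a (j - 1) +
            ((r - qi (j - 1)) / (qi j - qi (j - 1))) *\<^sub>R a j"
proof (cases "r = qi (j - 1)")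
  case True
  then show ?thesis
    using pl_interp_node[OF assms(1), of "j - 1" a] unit_partition_segment_less[OF assms(1,2)] assms(2)
    by auto
next
  case False
  then have "qi (j - 1) < r" using assms(3) by auto
  then show ?thesis using pl_interp_segment_right_closed[OF assms(1,2)] assms(3) by simp
qed

lemma pw_affine_pl_interp:
  fixes a :: "nat \<Rightarrow> 'v::real_normed_vector"
  assumes "unit_partition qi Ni" "cl \<longrightarrow> a 0 = a Ni"
  shows "pw_affine qi Ni cl (pl_interp qi Ni a)"
proof -
  define A where "A j = (qi j / (qi j - qi (j - 1))) *\<^sub>R a (j - 1) - (qi (j - 1) / (qi j - qi (j - 1))) *\<^sub>R a j" for j
  define B where "B j = (1 / (qi j - qi (j - 1))) *\<^sub>R (a j - a (j - 1))" for j
  have affine: "pl_interp qi Ni a r = A j + r *\<^sub>R B j" if "j \<in> {1..Ni}" "r \<in> {qi (j - 1)..qi j}" for j r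
    unfolding pl_interp_segment[OF assms(1) that] A_def B_def
    using unit_partition_segment_less[OF assms(1) that(1)]
    by (simp add: algebra_simps diff_divide_distrib scaleR_diff_right scaleR_diff_left)
  have "(\<Union>j\<in>{1..Ni}. {qi (j - 1)..qi j}) = {0..1}"
  proof
    show "(\<Union>j\<in>{1..Ni}. {qi (j - 1)..qi j}) \<subseteq> {0..1}"
    proof (rule UN_least)
      fix j assume "j \<in> {1..Ni}"
      then show "{qi (j - 1)..qi j} \<subseteq> {0..1}"
        using unit_partition_node_in_01[OF assms(1), of "j - 1"] unit_partition_node_in_01[OF assms(1), of j]
        by auto
    qed
    show "{0..1} \<subseteq> (\<Union>j\<in>{1..Ni}. {qi (j - 1)..qi j})"
      using unit_partition_cover[OF assms(1)] by blast
  qed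
  moreover have "continuous_on (\<Union>j\<in>{1..Ni}. {qi (j - 1)..qi j}) (pl_interp qi Ni a)"
    by (rule continuous_on_closed_Union)
       (auto intro!: continuous_on_eq[OF _ affine[symmetric]] continuous_intros)
  moreover have "pl_interp qi Ni a 0 = a 0" "pl_interp qi Ni a 1 = a Ni"
    using pl_interp_node[OF assms(1), of 0 a] pl_interp_node[OF assms(1), of Ni a] assms(1)
    unfolding unit_partition_def by auto
  ultimately show ?thesis
    unfolding pw_affine_def using assms(2) affine by metis
qed

section \<open>The arclength Dirichlet form of piecewise affine curves\<close>

lemma vector_derivative_pw_affine:
  fixes f :: "real \<Rightarrow> 'v::real_normed_vector"
  assumes "unit_partition qi Ni" "pw_affine qi Ni cl f" "j \<in> {1..Ni}" "qi (j - 1) < r" "r < qi j"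
  shows "vector_derivative f (at r) = (1 / (qi j - qi (j - 1))) *\<^sub>R (f (qi j) - f (qi (j - 1)))"
proof -
  define d where "d = qi j - qi (j - 1)"
  define g where "g r' = f (qi (j - 1)) + ((r' - qi (j - 1)) / d) *\<^sub>R (f (qi j) - f (qi (j - 1)))" for r'
  have "(g has_vector_derivative ((1 / d) *\<^sub>R (f (qi j) - f (qi (j - 1))))) (at r)"
    unfolding g_def by (auto intro!: derivative_eq_intros simp: divide_inverse)
  then have "(f has_vector_derivative ((1 / d) *\<^sub>R (f (qi j) - f (qi (j - 1))))) (at r)"
  proof (rule has_vector_derivative_transform_within_open[where S="{qi (j - 1)<..<qi j}"])
    fix y assume "y \<in> {qi (j - 1)<..<qi j}"
    then show "g y = f y" unfolding g_def d_def using pw_affine_on_segment[OF assms(1-3), of y] by auto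
  qed (use assms in auto)
  then show ?thesis unfolding d_def by (rule vector_derivative_at)
qed

abbreviation arclength_dirichlet ::
    "(real \<Rightarrow> real^3) \<Rightarrow> (real \<Rightarrow> real^3) \<Rightarrow> (real \<Rightarrow> real^3) \<Rightarrow> real \<Rightarrow> real" where
  "arclength_dirichlet x u v r \<equiv>
     ((vector_derivative u (at r) /\<^sub>R norm (vector_derivative x (at r))) \<bullet>
      (vector_derivative v (at r) /\<^sub>R norm (vector_derivative x (at r)))) * norm (vector_derivative x (at r))"

lemma has_integral_arclength_dirichlet_segment:
  fixes u v x :: "real \<Rightarrow> real^3"
  assumes P: "unit_partition qi Ni" and pw: "pw_affine qi Ni cu u" "pw_affine qi Ni cv v" "pw_affine qi Ni cx x"
    and j: "j \<in> {1..Ni}" and h: "norm (x (qi j) - x (qi (j - 1))) > 0"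
  shows "(arclength_dirichlet x u v has_integral
            ((u (qi j) - u (qi (j - 1))) \<bullet> (v (qi j) - v (qi (j - 1)))) / norm (x (qi j) - x (qi (j - 1))))
          {qi (j - 1)..qi j}"
proof -
  define d where "d = qi j - qi (j - 1)"
  have d: "d > 0" unfolding d_def using unit_partition_segment_less[OF P j] by simp
  define hh where "hh = norm (x (qi j) - x (qi (j - 1)))"
  have hh: "hh > 0" unfolding hh_def by (rule h)
  define c where "c = ((u (qi j) - u (qi (j - 1))) \<bullet> (v (qi j) - v (qi (j - 1)))) / (hh * d)"
  have "((\<lambda>r. c) has_integral (d * c)) {qi (j - 1)..qi j}"
    using has_integral_const_real[of c "qi (j - 1)" "qi j"] d unfolding d_def by simp
  moreover have "d * c = ((u (qi j) - u (qi (j - 1))) \<bullet> (v (qi j) - v (qi (j - 1)))) / hh"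
    using d hh unfolding c_def by simp
  ultimately have const: "((\<lambda>r. c) has_integral
      ((u (qi j) - u (qi (j - 1))) \<bullet> (v (qi j) - v (qi (j - 1)))) / hh) {qi (j - 1)..qi j}"
    by simp
  show ?thesis unfolding hh_def[symmetric]
  proof (rule has_integral_spike_finite[OF _ _ const, of "{qi (j - 1), qi j}"])
    fix r assume "r \<in> {qi (j - 1)..qi j} - {qi (j - 1), qi j}"
    then have r: "qi (j - 1) < r" "r < qi j" by auto
    have key: "(((1 / d) *\<^sub>R a /\<^sub>R (hh / d)) \<bullet> ((1 / d) *\<^sub>R b /\<^sub>R (hh / d))) * (hh / d) = (a \<bullet> b) / (hh * d)"
      for a b :: "real^3"
      using d hh by (simp add: inner_scaleR_left inner_scaleR_right field_simps power2_eq_square)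
    have "norm (vector_derivative x (at r)) = hh / d"
      using vector_derivative_pw_affine[OF P pw(3) j r] d unfolding d_def[symmetric] hh_def by simp
    then show "arclength_dirichlet x u v r = c"
      unfolding c_def vector_derivative_pw_affine[OF P pw(1) j r] vector_derivative_pw_affine[OF P pw(2) j r]
        d_def[symmetric] by (rule ssubst) (rule key)
  qed simp
qed

lemma integral_arclength_dirichlet:
  fixes u v x :: "real \<Rightarrow> real^3"
  assumes P: "unit_partition qi Ni" and pw: "pw_affine qi Ni cu u" "pw_affine qi Ni cv v" "pw_affine qi Ni cx x"
    and h: "\<And>j. j \<in> {1..Ni} \<Longrightarrow> norm (x (qi j) - x (qi (j - 1))) > 0"
  shows "integral {0..1} (arclength_dirichlet x u v)
       = (\<Sum>j\<in>{1..Ni}. ((u (qi j) - u (qi (j - 1))) \<bullet> (v (qi j) - v (qi (j - 1)))) /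
              norm (x (qi j) - x (qi (j - 1))))"
proof -
  let ?t = "\<lambda>j. ((u (qi j) - u (qi (j - 1))) \<bullet> (v (qi j) - v (qi (j - 1)))) / norm (x (qi j) - x (qi (j - 1)))"
  have "m \<le> Ni \<Longrightarrow> (arclength_dirichlet x u v has_integral (\<Sum>j\<in>{1..m}. ?t j)) {qi 0..qi m}" for m
  proof (induction m)
    case (Suc m)
    have "(arclength_dirichlet x u v has_integral (\<Sum>j\<in>{1..m}. ?t j) + ?t (Suc m)) {qi 0..qi (Suc m)}"
    proof (rule has_integral_combine[of _ "qi m"])
      show "qi 0 \<le> qi m" "qi m \<le> qi (Suc m)"
        using unit_partition_le[OF P] Suc.prems by auto
      show "(arclength_dirichlet x u v has_integral (\<Sum>j\<in>{1..m}. ?t j)) {qi 0..qi m}"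
        using Suc by simp
      show "(arclength_dirichlet x u v has_integral ?t (Suc m)) {qi m..qi (Suc m)}"
        using has_integral_arclength_dirichlet_segment[OF P pw _ h, of "Suc m"] Suc.prems by simp
    qed
    then show ?case by (simp add: add.commute)
  qed (simp add: has_integral_refl(2))
  from this[of Ni] have "(arclength_dirichlet x u v has_integral (\<Sum>j\<in>{1..Ni}. ?t j)) {0..1}"
    using P unfolding unit_partition_def by simp
  then show ?thesis by (rule integral_unique)
qed

lemma network_unit_partition:
  "network NC N q clsd NT ic rh \<Longrightarrow> i < NC \<Longrightarrow> unit_partition (q i) (N i)"
  unfolding network_def unit_partition_def by auto

lemma network_junction:
  "network NC N q clsd NT ic rh \<Longrightarrow> k < NT \<Longrightarrow> l < 3 \<Longrightarrow>
     ic k l < NC \<and> \<not> clsd (ic k l) \<and> rh k l \<in> {0, 1}"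
  unfolding network_def by auto

lemma network_open_curve_start:
  "network NC N q clsd NT ic rh \<Longrightarrow> i < NC \<Longrightarrow> \<not> clsd i \<Longrightarrow> \<exists>k<NT. \<exists>l<3. ic k l = i \<and> rh k l = 0"
  unfolding network_def by auto

lemma net_eq_0_if_nodes_eq_0:
  fixes u :: "nat \<Rightarrow> real \<Rightarrow> 'v::real_normed_vector"
  assumes P: "\<And>i. i < NC \<Longrightarrow> unit_partition (q i) (N i)"
    and u: "extensional_net NC u" "\<And>i. i < NC \<Longrightarrow> pw_affine (q i) (N i) (clsd i) (u i)"
    and nodes: "\<And>i j. i < NC \<Longrightarrow> j \<le> N i \<Longrightarrow> u i (q i j) = 0"
  shows "u = 0"
proof (intro ext)
  fix i r
  show "u i r = 0 i r"
  proof (cases "i < NC \<and> r \<in> {0..1}")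
    case True
    then show ?thesis using pw_affine_eq_0_if_nodes_eq_0[OF P u(2) nodes] by simp
  next
    case False
    then show ?thesis using u(1) unfolding extensional_net_def by auto
  qed
qed

lemma extensional_net_zero: "extensional_net NC 0"
  and extensional_net_add: "extensional_net NC u \<Longrightarrow> extensional_net NC v \<Longrightarrow> extensional_net NC (u + v)"
  and extensional_net_scaleR: "extensional_net NC u \<Longrightarrow> extensional_net NC (c *\<^sub>R u)"
  unfolding extensional_net_def by simp_all

lemma subspace_Wh: "subspace (Wh NC N q clsd)"
  unfolding subspace_def Wh_def
  by (simp add: extensional_net_zero extensional_net_add extensional_net_scaleR
      pw_affine_zero pw_affine_add pw_affine_scaleR)

lemma subspace_Vh: "subspace (Vh NC N q clsd NT ic rh)"
  unfolding subspace_def Vh_def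
  by (simp add: extensional_net_zero extensional_net_add extensional_net_scaleR
      pw_affine_zero pw_affine_add pw_affine_scaleR)

lemma subspace_V_Phi: "subspace (V_Phi gPhi NC N q clsd NT ic rh X)"
  using subspace_Vh[of NC N q clsd NT ic rh] unfolding subspace_def V_Phi_def
  by (simp add: inner_add_left)

section \<open>The mass-lumped inner product and the discrete stiffness form\<close>

lemma lumped_add: "lumped NC N q X (\<lambda>i r. f i r + g i r) = lumped NC N q X f + lumped NC N q X g"
  unfolding lumped_def by (simp add: sum.distrib algebra_simps)

lemma lumped_scale: "lumped NC N q X (\<lambda>i r. c * f i r) = c * lumped NC N q X f"
  unfolding lumped_def by (simp add: sum_distrib_left algebra_simps)

lemma lumped_nonneg:
  assumes "\<And>i j. i < NC \<Longrightarrow> j \<le> N i \<Longrightarrow> f i (q i j) \<ge> 0"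
  shows "lumped NC N q X f \<ge> 0"
  unfolding lumped_def using assms
  by (intro mult_nonneg_nonneg sum_nonneg) (auto simp del: One_nat_def)

lemma lumped_eq_0_imp_nodes_eq_0:
  assumes P: "\<And>i. i < NC \<Longrightarrow> unit_partition (q i) (N i)"
    and h: "\<And>i j. i < NC \<Longrightarrow> j \<in> {1..N i} \<Longrightarrow> norm (X i (q i j) - X i (q i (j - 1))) > 0"
    and nonneg: "\<And>i j. i < NC \<Longrightarrow> j \<le> N i \<Longrightarrow> f i (q i j) \<ge> 0"
    and zero: "lumped NC N q X f = 0"
    and i: "i < NC" and j: "j \<le> N i"
  shows "f i (q i j) = 0"
proof -
  let ?t = "\<lambda>i j. norm (X i (q i j) - X i (q i (j - 1))) * (f i (q i j) + f i (q i (j - 1)))"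
  have t_nonneg: "?t i' j' \<ge> 0" if "i' < NC" "j' \<in> {1..N i'}" for i' j'
    using h[OF that] nonneg[OF that(1), of j'] nonneg[OF that(1), of "j' - 1"] that by auto
  have "(\<Sum>i<NC. \<Sum>j\<in>{1..N i}. ?t i j) = 0"
    using zero unfolding lumped_def by simp
  then have "(\<Sum>j\<in>{1..N i}. ?t i j) = 0"
    using i by (subst (asm) sum_nonneg_eq_0_iff) (auto intro!: sum_nonneg t_nonneg simp del: One_nat_def)
  then have terms: "?t i j' = 0" if "j' \<in> {1..N i}" for j'
    using that by (subst (asm) sum_nonneg_eq_0_iff) (auto intro!: t_nonneg i simp del: One_nat_def)
  have ends: "f i (q i j') = 0 \<and> f i (q i (j' - 1)) = 0" if j': "j' \<in> {1..N i}" for j'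
  proof -
    have "f i (q i j') + f i (q i (j' - 1)) = 0"
      using terms[OF j'] h[OF i j'] by simp
    moreover have "f i (q i j') \<ge> 0" "f i (q i (j' - 1)) \<ge> 0"
      using nonneg[OF i] j' by auto
    ultimately show ?thesis by linarith
  qed
  have "N i \<ge> 1" using P[OF i] unfolding unit_partition_def by simp
  then show ?thesis
    using ends[of 1] ends[of j] j by (cases "j = 0") auto
qed

definition stiffness :: "nat \<Rightarrow> (nat \<Rightarrow> nat) \<Rightarrow> (nat \<Rightarrow> nat \<Rightarrow> real) \<Rightarrow> (nat \<Rightarrow> real \<Rightarrow> real^3)
    \<Rightarrow> (nat \<Rightarrow> real \<Rightarrow> real^3) \<Rightarrow> (nat \<Rightarrow> real \<Rightarrow> real^3) \<Rightarrow> real" where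
  "stiffness NC N q X u v = (\<Sum>i<NC. \<Sum>j\<in>{1..N i}.
      ((u i (q i j) - u i (q i (j - 1))) \<bullet> (v i (q i j) - v i (q i (j - 1)))) / norm (X i (q i j) - X i (q i (j - 1))))"

lemma linear_stiffness_left: "linear (\<lambda>u. stiffness NC N q X u v)"
proof (rule linearI)
  fix u u' :: "nat \<Rightarrow> real \<Rightarrow> real^3" and c :: real
  have "((u + u') i a - (u + u') i b) \<bullet> w = (u i a - u i b) \<bullet> w + (u' i a - u' i b) \<bullet> w"
    and "((c *\<^sub>R u) i a - (c *\<^sub>R u) i b) \<bullet> w = c * ((u i a - u i b) \<bullet> w)" for i a b w
    by (simp_all add: inner_add_left inner_diff_left algebra_simps)
  then show "stiffness NC N q X (u + u') v = stiffness NC N q X u v + stiffness NC N q X u' v"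
    and "stiffness NC N q X (c *\<^sub>R u) v = c *\<^sub>R stiffness NC N q X u v"
    unfolding stiffness_def by (simp_all add: add_divide_distrib sum.distrib sum_distrib_left)
qed

lemma linear_stiffness_right: "linear (stiffness NC N q X u)"
proof (rule linearI)
  fix v v' :: "nat \<Rightarrow> real \<Rightarrow> real^3" and c :: real
  have "w \<bullet> ((v + v') i a - (v + v') i b) = w \<bullet> (v i a - v i b) + w \<bullet> (v' i a - v' i b)"
    and "w \<bullet> ((c *\<^sub>R v) i a - (c *\<^sub>R v) i b) = c * (w \<bullet> (v i a - v i b))" for i a b w
    by (simp_all add: inner_add_right inner_diff_right algebra_simps)
  then show "stiffness NC N q X u (v + v') = stiffness NC N q X u v + stiffness NC N q X u v'"
    and "stiffness NC N q X u (c *\<^sub>R v) = c *\<^sub>R stiffness NC N q X u v"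
    unfolding stiffness_def by (simp_all add: add_divide_distrib sum.distrib sum_distrib_left)
qed

lemma stiffness_nonneg:
  assumes "\<And>i j. i < NC \<Longrightarrow> j \<in> {1..N i} \<Longrightarrow> norm (X i (q i j) - X i (q i (j - 1))) > 0"
  shows "stiffness NC N q X u u \<ge> 0"
  unfolding stiffness_def using assms by (intro sum_nonneg) (auto intro!: divide_nonneg_pos)

lemma stiffness_eq_0_imp_nodes_const:
  assumes h: "\<And>i j. i < NC \<Longrightarrow> j \<in> {1..N i} \<Longrightarrow> norm (X i (q i j) - X i (q i (j - 1))) > 0"
    and zero: "stiffness NC N q X u u = 0" and i: "i < NC"
  shows "j \<le> N i \<Longrightarrow> u i (q i j) = u i (q i 0)"
proof -
  let ?t = "\<lambda>i j. ((u i (q i j) - u i (q i (j - 1))) \<bullet> (u i (q i j) - u i (q i (j - 1))))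
        / norm (X i (q i j) - X i (q i (j - 1)))"
  have t_nonneg: "?t i' j' \<ge> 0" if "i' < NC" "j' \<in> {1..N i'}" for i' j'
    using h[OF that] by (auto intro!: divide_nonneg_pos)
  have "(\<Sum>j\<in>{1..N i}. ?t i j) = 0"
    using zero i unfolding stiffness_def
    by (subst (asm) sum_nonneg_eq_0_iff) (auto intro!: sum_nonneg t_nonneg simp del: One_nat_def)
  then have terms: "?t i j' = 0" if "j' \<in> {1..N i}" for j'
    using that by (subst (asm) sum_nonneg_eq_0_iff) (auto intro!: t_nonneg i simp del: One_nat_def)
  have step: "u i (q i j') = u i (q i (j' - 1))" if "j' \<in> {1..N i}" for j'
    using terms[OF that] h[OF i that] by auto
  show "j \<le> N i \<Longrightarrow> u i (q i j) = u i (q i 0)"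
    by (induction j) (use step in auto)
qed

lemma l2m_nabla_s_eq_stiffness:
  assumes net: "network NC N q clsd NT ic rh" and A: "assm_A NC N q clsd X"
    and pw: "\<And>i. i < NC \<Longrightarrow> pw_affine (q i) (N i) (clsd i) (X i)"
      "\<And>i. i < NC \<Longrightarrow> pw_affine (q i) (N i) (clsd i) (u i)"
      "\<And>i. i < NC \<Longrightarrow> pw_affine (q i) (N i) (clsd i) (v i)"
  shows "l2m NC X (nabla_s X u) (nabla_s X v) = stiffness NC N q X u v"
  unfolding l2m_def stiffness_def nabla_s_def
proof (rule sum.cong[OF refl])
  fix i assume "i \<in> {..<NC}"
  then show "integral {0..1} (arclength_dirichlet (X i) (u i) (v i)) = (\<Sum>j\<in>{1..N i}.
      ((u i (q i j) - u i (q i (j - 1))) \<bullet> (v i (q i j) - v i (q i (j - 1)))) / norm (X i (q i j) - X i (q i (j - 1))))"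
    using A unfolding assm_A_def
    by (intro integral_arclength_dirichlet[OF network_unit_partition[OF net] pw(2,3,1)]) auto
qed

section \<open>Discrete normals and constant tangential fields\<close>

lemma eq_0_if_orthogonal_to_spanning_set:
  fixes c :: "real^3"
  assumes "dim (span S) = 3" "\<And>x. x \<in> S \<Longrightarrow> c \<bullet> x = 0"
  shows "c = 0"
proof -
  have "dim S = DIM(real^3)"
    using assms(1) by simp
  then have "span S = UNIV"
    using dim_eq_full by blast
  then have "c \<bullet> c = 0"
    using orthogonal_to_span[of c S c] assms(2) unfolding orthogonal_def by simp
  then show ?thesis by simp
qed

lemma omega_M_periodic:
  assumes "clsd i" "N i \<ge> 1" "X i (q i 0) = X i (q i (N i))"
  shows "omega_M gPhi N q clsd X i 0 = omega_M gPhi N q clsd X i (N i)"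
  using assms unfolding omega_M_def omega_d_def omega_Phi_def nxt_def prv_def Let_def by auto

lemma V_Phi_eq_0_if_nodes_const_perp_omega_M:
  assumes net: "network NC N q clsd NT ic rh"
    and A1: "assm_A1 gPhi NC N q clsd X" and A2: "assm_A2 gPhi N q clsd NT ic X"
    and u: "u \<in> V_Phi gPhi NC N q clsd NT ic rh X"
    and const: "\<And>i j. i < NC \<Longrightarrow> j \<le> N i \<Longrightarrow> u i (q i j) = u i (q i 0)"
    and perp_M: "\<And>i j. i < NC \<Longrightarrow> j \<le> N i \<Longrightarrow> u i (q i j) \<bullet> omega_M gPhi N q clsd X i j = 0"
  shows "u = 0"
proof -
  note P = network_unit_partition[OF net]
  have uV: "u \<in> Vh NC N q clsd NT ic rh"
    using u unfolding V_Phi_def by blast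
  define c where "c i = u i (q i 0)" for i
  have perp: "c i \<bullet> omega_M gPhi N q clsd X i j = 0 \<and> c i \<bullet> omega_Phi gPhi q X i j = 0"
    if "i < NC" "j \<le> N i" for i j
  proof -
    have "u i (q i j) \<bullet> omega_Phi gPhi q X i j = 0"
      using u that unfolding V_Phi_def by blast
    then show ?thesis using perp_M[OF that] const[OF that] unfolding c_def by simp
  qed
  have endpoint: "u i r = c i" if "i < NC" "r \<in> {0, 1}" for i r
    using const[OF that(1), of "N i"] P[OF that(1)] that(2) unfolding c_def unit_partition_def by auto
  have "c i = 0" if i: "i < NC" for i
  proof (cases "clsd i")
    case True
    with A1 i have "dim (span (\<Union>j\<in>{1..N i}. {omega_M gPhi N q clsd X i j, omega_Phi gPhi q X i j})) = 3"
      unfolding assm_A1_def by blast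
    then show ?thesis
      by (rule eq_0_if_orthogonal_to_spanning_set) (use perp i in auto)
  next
    case False
    obtain k l where k: "k < NT" "l < 3" "ic k l = i" "rh k l = 0"
      using network_open_curve_start[OF net i False] by blast
    have junction: "u (ic k l') (rh k l') = u (ic k 0) (rh k 0)" if "l' < 3" for l'
    proof -
      have "l' = 0 \<or> l' = 1 \<or> l' = 2" using that by auto
      then show ?thesis using uV k(1) unfolding Vh_def by auto
    qed
    have same: "c (ic k l') = c (ic k 0)" if l': "l' < 3" for l'
    proof -
      have "ic k l' < NC" "rh k l' \<in> {0, 1}" "ic k 0 < NC" "rh k 0 \<in> {0, 1}"
        using network_junction[OF net k(1)] l' by auto
      then have "c (ic k l') = u (ic k l') (rh k l')" "u (ic k 0) (rh k 0) = c (ic k 0)"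
        using endpoint by metis+
      with junction[OF l'] show ?thesis by simp
    qed
    have "dim (span (\<Union>l<3. \<Union>j\<in>{1..<N (ic k l)}.
        {omega_M gPhi N q clsd X (ic k l) j, omega_Phi gPhi q X (ic k l) j})) = 3"
      using A2 k(1) unfolding assm_A2_def by blast
    then have "c (ic k 0) = 0"
    proof (rule eq_0_if_orthogonal_to_spanning_set)
      fix x assume "x \<in> (\<Union>l<3. \<Union>j\<in>{1..<N (ic k l)}.
          {omega_M gPhi N q clsd X (ic k l) j, omega_Phi gPhi q X (ic k l) j})"
      then obtain l' j where l': "l' < 3" and "j \<in> {1..<N (ic k l')}"
        and x: "x = omega_M gPhi N q clsd X (ic k l') j \<or> x = omega_Phi gPhi q X (ic k l') j"
        by blast
      then have j: "j \<le> N (ic k l')" by simp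
      have "ic k l' < NC" using network_junction[OF net k(1) l'] by simp
      then show "c (ic k 0) \<bullet> x = 0"
        using perp[of "ic k l'" j] j x same[OF l'] by auto
    qed
    then show ?thesis using same[OF k(2)] k(3) by simp
  qed
  then have nodes: "u i (q i j) = 0" if "i < NC" "j \<le> N i" for i j
    using const[OF that] that(1) unfolding c_def by metis
  show ?thesis
  proof (rule net_eq_0_if_nodes_eq_0)
    show "extensional_net NC u" "\<And>i. i < NC \<Longrightarrow> pw_affine (q i) (N i) (clsd i) (u i)"
      using uV unfolding Vh_def by auto
  qed (use P nodes in auto)
qed

definition nodal_interpolant :: "nat \<Rightarrow> (nat \<Rightarrow> nat) \<Rightarrow> (nat \<Rightarrow> nat \<Rightarrow> real) \<Rightarrow> (nat \<Rightarrow> nat \<Rightarrow> real)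
    \<Rightarrow> nat \<Rightarrow> real \<Rightarrow> real" where
  "nodal_interpolant NC N q a i r = (if i < NC \<and> r \<in> {0..1} then pl_interp (q i) (N i) (a i) r else 0)"

lemma nodal_interpolant_node:
  assumes "network NC N q clsd NT ic rh" "i < NC" "j \<le> N i"
  shows "nodal_interpolant NC N q a i (q i j) = a i j"
proof -
  have "unit_partition (q i) (N i)" using network_unit_partition assms(1,2) .
  then show ?thesis
    unfolding nodal_interpolant_def using unit_partition_node_in_01 pl_interp_node assms(2,3) by simp
qed

lemma nodal_interpolant_in_Wh:
  assumes net: "network NC N q clsd NT ic rh"
    and periodic: "\<And>i. i < NC \<Longrightarrow> clsd i \<Longrightarrow> a i 0 = a i (N i)"
  shows "nodal_interpolant NC N q a \<in> Wh NC N q clsd"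
  unfolding Wh_def
proof (intro CollectI conjI allI impI)
  show "extensional_net NC (nodal_interpolant NC N q a)"
    unfolding extensional_net_def nodal_interpolant_def by auto
  fix i assume i: "i < NC"
  show "pw_affine (q i) (N i) (clsd i) (nodal_interpolant NC N q a i)"
    using network_unit_partition[OF net i] periodic[OF i]
    by (intro pw_affine_cong[OF _ pw_affine_pl_interp]) (auto simp: nodal_interpolant_def i)
qed

section \<open>The linear system of the scheme\<close>

locale discrete_curvature_flow =
  fixes gPhi :: "real^3 \<Rightarrow> real^3" and NC NT :: nat and N :: "nat \<Rightarrow> nat" and q :: "nat \<Rightarrow> nat \<Rightarrow> real"
    and clsd :: "nat \<Rightarrow> bool" and ic :: "nat \<Rightarrow> nat \<Rightarrow> nat" and rh :: "nat \<Rightarrow> nat \<Rightarrow> real"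
    and X :: "nat \<Rightarrow> real \<Rightarrow> real^3" and sigma tau :: real
  assumes net: "network NC N q clsd NT ic rh"
    and X_in: "X \<in> Vh NC N q clsd NT ic rh"
    and A: "assm_A NC N q clsd X"
    and A1: "assm_A1 gPhi NC N q clsd X"
    and A2: "assm_A2 gPhi N q clsd NT ic X"
    and sigma_pos: "sigma > 0" and tau_pos: "tau > 0"
begin

abbreviation W where "W \<equiv> Wh NC N q clsd"
abbreviation V where "V \<equiv> V_Phi gPhi NC N q clsd NT ic rh X"

lemma partition: "i < NC \<Longrightarrow> unit_partition (q i) (N i)"
  using network_unit_partition[OF net] .

lemma edges_pos: "i < NC \<Longrightarrow> j \<in> {1..N i} \<Longrightarrow> norm (X i (q i j) - X i (q i (j - 1))) > 0"
  using A unfolding assm_A_def by blast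

lemma pw_affine_V: "u \<in> V \<Longrightarrow> i < NC \<Longrightarrow> pw_affine (q i) (N i) (clsd i) (u i)"
  and pw_affine_W: "w \<in> W \<Longrightarrow> i < NC \<Longrightarrow> pw_affine (q i) (N i) (clsd i) (w i)"
  and pw_affine_X: "i < NC \<Longrightarrow> pw_affine (q i) (N i) (clsd i) (X i)"
  using X_in unfolding V_Phi_def Vh_def Wh_def by blast+

lemma lumped_eq_0_nodes:
  "lumped NC N q X f = 0 \<Longrightarrow> (\<And>i j. i < NC \<Longrightarrow> j \<le> N i \<Longrightarrow> f i (q i j) \<ge> 0) \<Longrightarrow>
    i < NC \<Longrightarrow> j \<le> N i \<Longrightarrow> f i (q i j) = 0"
  by (rule lumped_eq_0_imp_nodes_eq_0[where NC=NC and N=N and q=q and X=X, OF partition edges_pos])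

lemma fun_eq_0_if_nodes_eq_0:
  "extensional_net NC u \<Longrightarrow> (\<And>i. i < NC \<Longrightarrow> pw_affine (q i) (N i) (clsd i) (u i)) \<Longrightarrow>
    (\<And>i j. i < NC \<Longrightarrow> j \<le> N i \<Longrightarrow> u i (q i j) = 0) \<Longrightarrow> u = 0"
  by (rule net_eq_0_if_nodes_eq_0[where NC=NC and N=N and q=q, OF partition])

lemma omega_M_fun_node:
  "i < NC \<Longrightarrow> j \<le> N i \<Longrightarrow> omega_M_fun gPhi N q clsd X i (q i j) = omega_M gPhi N q clsd X i j"
  unfolding omega_M_fun_def using pl_interp_node partition by blast

lemma omega_M_closed:
  assumes "i < NC" "clsd i"
  shows "omega_M gPhi N q clsd X i 0 = omega_M gPhi N q clsd X i (N i)"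
proof (rule omega_M_periodic[where clsd=clsd and i=i, OF assms(2)])
  show "N i \<ge> 1" "X i (q i 0) = X i (q i (N i))"
    using partition[OF assms(1)] pw_affine_X[OF assms(1)] assms(2)
    unfolding unit_partition_def pw_affine_def by auto
qed

definition motion_form ::
    "(nat \<Rightarrow> real \<Rightarrow> real^3) \<Rightarrow> (nat \<Rightarrow> real \<Rightarrow> real) \<Rightarrow> (nat \<Rightarrow> real \<Rightarrow> real) \<Rightarrow> real" where
  "motion_form dX kappa chi =
     lumped NC N q X (\<lambda>i r. (dX i r /\<^sub>R tau) \<bullet> (chi i r *\<^sub>R omega_M_fun gPhi N q clsd X i r))
     - sigma * lumped NC N q X (\<lambda>i r. kappa i r * chi i r)"

definition curvature_form ::
    "(nat \<Rightarrow> real \<Rightarrow> real^3) \<Rightarrow> (nat \<Rightarrow> real \<Rightarrow> real) \<Rightarrow> (nat \<Rightarrow> real \<Rightarrow> real^3) \<Rightarrow> real" where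
  "curvature_form dX kappa eta =
     lumped NC N q X (\<lambda>i r. (kappa i r *\<^sub>R omega_M_fun gPhi N q clsd X i r) \<bullet> eta i r)
     + stiffness NC N q X dX eta"

definition system_form ::
    "(nat \<Rightarrow> real \<Rightarrow> real^3) \<times> (nat \<Rightarrow> real \<Rightarrow> real) \<Rightarrow> (nat \<Rightarrow> real \<Rightarrow> real^3) \<times> (nat \<Rightarrow> real \<Rightarrow> real)
      \<Rightarrow> real" where
  "system_form w v = motion_form (fst w) (snd w) (snd v) + curvature_form (fst w) (snd w) (fst v)"

definition system_rhs ::
    "(nat \<Rightarrow> real \<Rightarrow> real) \<Rightarrow> (nat \<Rightarrow> real \<Rightarrow> real^3) \<times> (nat \<Rightarrow> real \<Rightarrow> real) \<Rightarrow> real" where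
  "system_rhs F v = lumped NC N q X (\<lambda>i r. F i r * snd v i r) - stiffness NC N q X X (fst v)"

lemma linear_system_form_left: "linear (\<lambda>w. system_form w v)"
  by (rule linearI) (simp_all add: system_form_def motion_form_def curvature_form_def
      linear_add[OF linear_stiffness_left] linear_scale[OF linear_stiffness_left]
      scaleR_add_right inner_add_left lumped_add lumped_scale algebra_simps)

lemma linear_system_form_right: "linear (system_form w)"
  by (rule linearI) (simp_all add: system_form_def motion_form_def curvature_form_def
      linear_add[OF linear_stiffness_right] linear_scale[OF linear_stiffness_right]
      scaleR_add_right inner_add_right lumped_add lumped_scale algebra_simps)

lemma linear_system_rhs: "linear (system_rhs F)"
  by (rule linearI) (simp_all add: system_rhs_def
      linear_add[OF linear_stiffness_right] linear_scale[OF linear_stiffness_right]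
      lumped_add lumped_scale algebra_simps)

lemma motion_form_zero: "motion_form dX kappa 0 = 0"
  and curvature_form_zero: "curvature_form dX kappa 0 = 0"
  unfolding motion_form_def curvature_form_def lumped_def
  using linear_0[OF linear_stiffness_right] by simp_all

text \<open>Testing with \<open>\<chi> = \<kappa>\<close> and \<open>\<eta> = \<delta>X\<close> cancels the coupling terms and leaves the
  discrete energy \<open>\<tau>\<sigma>|\<kappa>|\<^sup>2\<^sub>h + |\<nabla>\<^sub>s\<delta>X|\<^sup>2\<close>.\<close>

lemma homogeneous_system_energy:
  assumes dX: "dX \<in> V" and kappa: "kappa \<in> W"
    and motion: "motion_form dX kappa kappa = 0" and curvature: "curvature_form dX kappa dX = 0"
  shows "kappa = 0" and "\<And>i j. i < NC \<Longrightarrow> j \<le> N i \<Longrightarrow> dX i (q i j) = dX i (q i 0)"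
proof -
  let ?K = "lumped NC N q X (\<lambda>i r. kappa i r * kappa i r)"
  let ?S = "stiffness NC N q X dX dX"
  let ?M = "lumped NC N q X (\<lambda>i r. (kappa i r *\<^sub>R omega_M_fun gPhi N q clsd X i r) \<bullet> dX i r)"
  have "lumped NC N q X (\<lambda>i r. (dX i r /\<^sub>R tau) \<bullet> (kappa i r *\<^sub>R omega_M_fun gPhi N q clsd X i r)) =
        lumped NC N q X (\<lambda>i r. (1 / tau) * ((kappa i r *\<^sub>R omega_M_fun gPhi N q clsd X i r) \<bullet> dX i r))"
    by (rule arg_cong[where f="lumped NC N q X"]) (simp add: fun_eq_iff inner_commute field_simps)
  then have "?M = tau * sigma * ?K"
    using motion tau_pos unfolding motion_form_def lumped_scale by (simp add: field_simps)
  then have "tau * sigma * ?K + ?S = 0"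
    using curvature unfolding curvature_form_def by simp
  moreover have "?K \<ge> 0"
    by (rule lumped_nonneg) simp
  moreover have "?S \<ge> 0"
    using stiffness_nonneg edges_pos by blast
  moreover have "tau * sigma > 0"
    using tau_pos sigma_pos by simp
  ultimately have K: "?K = 0" and S: "?S = 0"
    by (smt (verit) mult_pos_pos mult_nonneg_nonneg)+
  have "kappa i (q i j) = 0" if "i < NC" "j \<le> N i" for i j
    using lumped_eq_0_nodes[OF K _ that] by simp
  then show "kappa = 0"
    using fun_eq_0_if_nodes_eq_0[OF _ pw_affine_W[OF kappa]] kappa unfolding Wh_def by blast
  show "\<And>i j. i < NC \<Longrightarrow> j \<le> N i \<Longrightarrow> dX i (q i j) = dX i (q i 0)"
    using stiffness_eq_0_imp_nodes_const[OF edges_pos S] by blast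
qed

lemma homogeneous_system_trivial:
  assumes dX: "dX \<in> V" and kappa: "kappa \<in> W"
    and motion: "\<And>chi. chi \<in> W \<Longrightarrow> motion_form dX kappa chi = 0"
    and curvature: "\<And>eta. eta \<in> V \<Longrightarrow> curvature_form dX kappa eta = 0"
  shows "dX = 0 \<and> kappa = 0"
proof -
  note energy = homogeneous_system_energy[OF dX kappa motion[OF kappa] curvature[OF dX]]
  define a where "a i j = dX i (q i j) \<bullet> omega_M gPhi N q clsd X i j" for i j
  have "a i 0 = a i (N i)" if "i < NC" "clsd i" for i
    using omega_M_closed[OF that] energy(2)[OF that(1), of "N i"] unfolding a_def by simp
  then have "nodal_interpolant NC N q a \<in> W"
    by (rule nodal_interpolant_in_Wh[OF net])
  then have "motion_form dX 0 (nodal_interpolant NC N q a) = 0"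
    using motion energy(1) by simp
  moreover define g where "g i r = (dX i r /\<^sub>R tau) \<bullet>
      (nodal_interpolant NC N q a i r *\<^sub>R omega_M_fun gPhi N q clsd X i r)" for i r
  ultimately have "lumped NC N q X g = 0"
    unfolding motion_form_def lumped_def by simp
  moreover have node: "g i (q i j) = a i j * a i j / tau" if "i < NC" "j \<le> N i" for i j
    unfolding g_def nodal_interpolant_node[OF net that] omega_M_fun_node[OF that] a_def
    by (simp add: inner_commute divide_inverse)
  ultimately have "g i (q i j) = 0" if "i < NC" "j \<le> N i" for i j
    using lumped_eq_0_nodes[OF _ _ that] node tau_pos by simp
  then have "a i j = 0" if "i < NC" "j \<le> N i" for i j
    using node[OF that] that tau_pos by simp
  then have "dX = 0"
    using V_Phi_eq_0_if_nodes_const_perp_omega_M[OF net A1 A2 dX energy(2)] unfolding a_def by simp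
  with energy(1) show ?thesis by simp
qed

lemma system_form_nondegenerate:
  assumes w: "w \<in> V \<times> W" and kernel: "\<forall>v\<in>V \<times> W. system_form w v = 0"
  shows "w = 0"
proof -
  have "0 \<in> V" "0 \<in> W"
    using subspace_0[OF subspace_V_Phi] subspace_0[OF subspace_Wh] by auto
  then have "motion_form (fst w) (snd w) chi = 0" if "chi \<in> W" for chi
    using kernel that curvature_form_zero unfolding system_form_def by force
  moreover have "curvature_form (fst w) (snd w) eta = 0" if "eta \<in> V" for eta
    using kernel that \<open>0 \<in> W\<close> motion_form_zero unfolding system_form_def by force
  ultimately show ?thesis
    using homogeneous_system_trivial[of "fst w" "snd w"] w by (simp add: prod_eq_iff mem_Times_iff)
qed

lemma finite_basis:
  obtains B where "finite B" "independent B" "span B = V \<times> W"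
proof -
  define K where "K = (SIGMA i:{..<NC}. {..N i})"
  define E where "E w = (\<lambda>k. if k \<in> K then (fst w (fst k) (q (fst k) (snd k)), snd w (fst k) (q (fst k) (snd k)))
      else 0)" for w :: "(nat \<Rightarrow> real \<Rightarrow> real^3) \<times> (nat \<Rightarrow> real \<Rightarrow> real)"
  have "finite K" unfolding K_def by auto
  have E: "linear E"
    by (rule linearI) (auto simp: E_def fun_eq_iff)
  have V_times_W: "subspace (V \<times> W)"
    by (rule subspace_Times[OF subspace_V_Phi subspace_Wh])
  have "inj_on E (V \<times> W)"
    unfolding linear_injective_on_subspace_0[OF E V_times_W]
  proof (intro ballI impI)
    fix w assume w: "w \<in> V \<times> W" and "E w = 0"
    then have nodes: "fst w i (q i j) = 0" "snd w i (q i j) = 0" if "i < NC" "j \<le> N i" for i j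
      using fun_cong[OF \<open>E w = 0\<close>, of "(i, j)"] that unfolding E_def K_def by (auto simp: zero_prod_def)
    have "fst w \<in> V" "snd w \<in> W"
      using w by auto
    then have "fst w = 0" "snd w = 0"
      using fun_eq_0_if_nodes_eq_0[OF _ pw_affine_V[OF \<open>fst w \<in> V\<close>] nodes(1)]
        fun_eq_0_if_nodes_eq_0[OF _ pw_affine_W[OF \<open>snd w \<in> W\<close>] nodes(2)]
      unfolding V_Phi_def Vh_def Wh_def by blast+
    then show "w = 0" by (simp add: prod_eq_iff)
  qed
  moreover have "E ` (V \<times> W) \<subseteq> span (point_basis K)"
    unfolding E_def by (auto intro!: finite_support_in_span_point_basis[OF \<open>finite K\<close>])
  ultimately show thesis
    using finite_basis_if_inj_on_into_finite_span[OF V_times_W E] finite_point_basis[OF \<open>finite K\<close>] that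
    by blast
qed

lemma curvature_equations_iff:
  assumes "dX \<in> V"
  shows "(\<forall>eta\<in>V. lumped NC N q X (\<lambda>i r. (kappa i r *\<^sub>R omega_M_fun gPhi N q clsd X i r) \<bullet> eta i r)
          + l2m NC X (nabla_s X dX) (nabla_s X eta) = - l2m NC X (nabla_s X X) (nabla_s X eta))
    \<longleftrightarrow> (\<forall>eta\<in>V. curvature_form dX kappa eta = - stiffness NC N q X X eta)"
proof -
  have "l2m NC X (nabla_s X u) (nabla_s X eta) = stiffness NC N q X u eta" if "u = dX \<or> u = X" "eta \<in> V" for u eta
    using that assms pw_affine_V pw_affine_X by (intro l2m_nabla_s_eq_stiffness[OF net A]) auto
  then show ?thesis
    unfolding curvature_form_def by auto
qed

lemma system_iff_equations:
  "(\<forall>v\<in>V \<times> W. system_form (dX, kappa) v = system_rhs F v) \<longleftrightarrow>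
   (\<forall>chi\<in>W. motion_form dX kappa chi = lumped NC N q X (\<lambda>i r. F i r * chi i r)) \<and>
   (\<forall>eta\<in>V. curvature_form dX kappa eta = - stiffness NC N q X X eta)"
proof
  assume sys: "\<forall>v\<in>V \<times> W. system_form (dX, kappa) v = system_rhs F v"
  have "0 \<in> V" "0 \<in> W"
    using subspace_0[OF subspace_V_Phi] subspace_0[OF subspace_Wh] by auto
  then show "(\<forall>chi\<in>W. motion_form dX kappa chi = lumped NC N q X (\<lambda>i r. F i r * chi i r)) \<and>
      (\<forall>eta\<in>V. curvature_form dX kappa eta = - stiffness NC N q X X eta)"
    using sys linear_0[OF linear_stiffness_right]
    by (force simp: system_form_def system_rhs_def motion_form_zero curvature_form_zero lumped_def)
qed (auto simp: system_form_def system_rhs_def)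

lemma solution_iff_system:
  "(\<lambda>(dX, kappa). dX \<in> V \<and> kappa \<in> W \<and>
     (\<forall>chi\<in>W.
        lumped NC N q X (\<lambda>i r. (dX i r /\<^sub>R tau) \<bullet> (chi i r *\<^sub>R omega_M_fun gPhi N q clsd X i r))
        - sigma * lumped NC N q X (\<lambda>i r. kappa i r * chi i r)
        = lumped NC N q X (\<lambda>i r. F i r * chi i r)) \<and>
     (\<forall>eta\<in>V.
        lumped NC N q X (\<lambda>i r. (kappa i r *\<^sub>R omega_M_fun gPhi N q clsd X i r) \<bullet> eta i r)
        + l2m NC X (nabla_s X dX) (nabla_s X eta)
        = - l2m NC X (nabla_s X X) (nabla_s X eta)))
   = (\<lambda>w. w \<in> V \<times> W \<and> (\<forall>v\<in>V \<times> W. system_form w v = system_rhs F v))"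
  unfolding fun_eq_iff split_paired_All prod.case mem_Times_iff fst_conv snd_conv system_iff_equations
    motion_form_def
  using curvature_equations_iff by blast

end

theorem mainTheorem1:
  fixes Phi :: "real^3 \<Rightarrow> real" and gPhi :: "real^3 \<Rightarrow> real^3"
    and D2Phi :: "real^3 \<Rightarrow> ((real^3) \<Rightarrow>\<^sub>L (real^3))"
    and NC NT :: nat and N :: "nat \<Rightarrow> nat" and q :: "nat \<Rightarrow> nat \<Rightarrow> real"
    and clsd :: "nat \<Rightarrow> bool" and ic :: "nat \<Rightarrow> nat \<Rightarrow> nat" and rh :: "nat \<Rightarrow> nat \<Rightarrow> real"
    and X :: "nat \<Rightarrow> real \<Rightarrow> real^3" and F :: "nat \<Rightarrow> real \<Rightarrow> real"
    and sigma tau :: real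
  assumes Phi_grad: "\<And>z. (Phi has_derivative (\<lambda>h. gPhi z \<bullet> h)) (at z)"
    and Phi_C2: "\<And>z. (gPhi has_derivative blinfun_apply (D2Phi z)) (at z)" "continuous_on UNIV D2Phi"
    and Phi_regular: "\<And>z. Phi z = 0 \<Longrightarrow> gPhi z \<noteq> 0"
    and net: "network NC N q clsd NT ic rh"
    and X_in: "X \<in> Vh NC N q clsd NT ic rh"
    and X_nodes: "\<And>i j. i < NC \<Longrightarrow> j \<le> N i \<Longrightarrow> gPhi (X i (q i j)) \<noteq> 0"
    and sigma_pos: "sigma > 0" and tau_pos: "tau > 0"
    and A: "assm_A NC N q clsd X"
    and A1: "assm_A1 gPhi NC N q clsd X"
    and A2: "assm_A2 gPhi N q clsd NT ic X"
    and F_in: "F \<in> Wh NC N q clsd"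
  shows "\<exists>!(dX, kappa).
     dX \<in> V_Phi gPhi NC N q clsd NT ic rh X \<and> kappa \<in> Wh NC N q clsd \<and>
     (\<forall>chi\<in>Wh NC N q clsd.
        lumped NC N q X (\<lambda>i r. (dX i r /\<^sub>R tau) \<bullet> (chi i r *\<^sub>R omega_M_fun gPhi N q clsd X i r))
        - sigma * lumped NC N q X (\<lambda>i r. kappa i r * chi i r)
        = lumped NC N q X (\<lambda>i r. F i r * chi i r)) \<and>
     (\<forall>eta\<in>V_Phi gPhi NC N q clsd NT ic rh X.
        lumped NC N q X (\<lambda>i r. (kappa i r *\<^sub>R omega_M_fun gPhi N q clsd X i r) \<bullet> eta i r)
        + l2m NC X (nabla_s X dX) (nabla_s X eta)
        = - l2m NC X (nabla_s X X) (nabla_s X eta))"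
proof -
  interpret discrete_curvature_flow gPhi NC NT N q clsd ic rh X sigma tau
    using net X_in A A1 A2 sigma_pos tau_pos by unfold_locales
  obtain B where "finite B" "independent B" "span B = V \<times> W"
    by (rule finite_basis)
  then have "\<exists>!w. w \<in> V \<times> W \<and> (\<forall>v\<in>V \<times> W. system_form w v = system_rhs F v)"
    using linear_system_form_left linear_system_form_right linear_system_rhs system_form_nondegenerate
    by (rule bilinear_form_unique_solution)
  then show ?thesis
    unfolding solution_iff_system .
qed

end
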